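(* Let $F : L_n \to \Delta K$ be a non-degenerate $2$-filtration and $p$ a path in $L_n$. Suppose simplex $\sigma$ is added to the 1-filtration induced by $p$ at the step $(i,j)\to(i+\delta_i,j+\delta_j)$, simplex $\tau$ is added at the step $(k,l)\to(k+\delta_k,l+\delta_l)$, and $\sigma$ and $\tau$ are paired in this 1-filtration. Then $\sigma$ and $\tau$ are paired in the 1-filtration induced by every path that takes these two steps.
   Context: $K$ is a finite simplicial complex, coefficients in a field. $L_n=\{0,\dots,n\}^2$ with product order, $\bot=(0,0)$, $\top=(n,n)$. A $2$-filtration is a monotone map $F$ from $L_n$ to subcomplexes of $K$ with $F(\bot)=\emptyset$, $F(\top)=K$. Lower corners of a simplex are the minimal elements of the upset of grades where it is present; $F$ is non-degenerate if any two distinct lower corners differ in both coordinates. A path is a sequence of grades $(0,0)=g_0,\dots,g_{2n}=(n,n)$ where each step $g_s\to g_{s+1}$ adds $(1,0)$ or $(0,1)$ (so $\delta$'s above are in $\{0,1\}$ with exactly one equal to $1$); it induces the 1-filtration $s\mapsto F(g_s)$, and a simplex is added at the step $g_s\to g_{s+1}$ if it lies in $F(g_{s+1})\setminus F(g_s)$ (by non-degeneracy at most one simplex per step). Two simplices are paired in such a 1-filtration if they form a pair of the standard persistence pairing (the negative simplex kills the class created by the positive one; equivalently via the lowest nonzero entries of a reduced matrix $R=DV$). *)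

theory Defs
  imports Main
begin

definition simplicial_complex :: "'v set set \<Rightarrow> bool" where
  "simplicial_complex K \<longleftrightarrow> finite K \<and>
     (\<forall>s\<in>K. finite s \<and> s \<noteq> {}) \<and>
     (\<forall>s\<in>K. \<forall>t. t \<subseteq> s \<and> t \<noteq> {} \<longrightarrow> t \<in> K)"

definition subcomplex :: "'v set set \<Rightarrow> 'v set set \<Rightarrow> bool" where
  "subcomplex L K \<longleftrightarrow> L \<subseteq> K \<and> (\<forall>s\<in>L. \<forall>t. t \<subseteq> s \<and> t \<noteq> {} \<longrightarrow> t \<in> L)"

definition grid :: "nat \<Rightarrow> (nat \<times> nat) set" where
  "grid n = {0..n} \<times> {0..n}"

definition grade_le :: "nat \<times> nat \<Rightarrow> nat \<times> nat \<Rightarrow> bool" where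
  "grade_le g h \<longleftrightarrow> fst g \<le> fst h \<and> snd g \<le> snd h"

definition two_filtration :: "'v set set \<Rightarrow> nat \<Rightarrow> (nat \<times> nat \<Rightarrow> 'v set set) \<Rightarrow> bool" where
  "two_filtration K n F \<longleftrightarrow>
     (\<forall>g\<in>grid n. subcomplex (F g) K) \<and>
     (\<forall>g\<in>grid n. \<forall>h\<in>grid n. grade_le g h \<longrightarrow> F g \<subseteq> F h) \<and>
     F (0,0) = {} \<and> F (n,n) = K"

definition lower_corners :: "nat \<Rightarrow> (nat \<times> nat \<Rightarrow> 'v set set) \<Rightarrow> 'v set \<Rightarrow> (nat \<times> nat) set" where
  "lower_corners n F s = {g \<in> grid n. s \<in> F g \<and>
      (\<forall>h\<in>grid n. s \<in> F h \<and> grade_le h g \<longrightarrow> h = g)}"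

definition non_degenerate :: "'v set set \<Rightarrow> nat \<Rightarrow> (nat \<times> nat \<Rightarrow> 'v set set) \<Rightarrow> bool" where
  "non_degenerate K n F \<longleftrightarrow>
     (\<forall>s\<in>K. \<forall>t\<in>K. \<forall>g\<in>lower_corners n F s. \<forall>h\<in>lower_corners n F t.
        (s, g) \<noteq> (t, h) \<longrightarrow> fst g \<noteq> fst h \<and> snd g \<noteq> snd h)"

definition is_path :: "nat \<Rightarrow> (nat \<Rightarrow> nat \<times> nat) \<Rightarrow> bool" where
  "is_path n p \<longleftrightarrow> p 0 = (0,0) \<and> p (2*n) = (n,n) \<and>
     (\<forall>s<2*n. p (Suc s) = (fst (p s) + 1, snd (p s)) \<or> p (Suc s) = (fst (p s), snd (p s) + 1))"

definition takes_step :: "nat \<Rightarrow> (nat \<Rightarrow> nat \<times> nat) \<Rightarrow> nat \<times> nat \<Rightarrow> nat \<times> nat \<Rightarrow> bool" where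
  "takes_step n p g h \<longleftrightarrow> (\<exists>s<2*n. p s = g \<and> p (Suc s) = h)"

text \<open>The step index at which a simplex enters the 1-filtration s |-> F (p s).\<close>
definition entry_time :: "nat \<Rightarrow> (nat \<times> nat \<Rightarrow> 'v set set) \<Rightarrow> (nat \<Rightarrow> nat \<times> nat) \<Rightarrow> 'v set \<Rightarrow> nat" where
  "entry_time n F p s = (THE i. i < 2*n \<and> s \<in> F (p (Suc i)) \<and> s \<notin> F (p i))"

text \<open>Coefficient of the face s in the boundary of t (vertices ordered by the linorder):
  (-1)^k where k is the position of the removed vertex.\<close>
definition bd_coeff :: "'v::linorder set \<Rightarrow> 'v set \<Rightarrow> 'k::field" where
  "bd_coeff s t = (if s \<subseteq> t \<and> card t = card s + 1
      then (-1) ^ card {v \<in> s. v < Min (t - s)} else 0)"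

definition is_low :: "'v set set \<Rightarrow> ('v set \<Rightarrow> nat) \<Rightarrow> ('v set \<Rightarrow> 'v set \<Rightarrow> 'k::field) \<Rightarrow> 'v set \<Rightarrow> 'v set \<Rightarrow> bool" where
  "is_low K t R j i \<longleftrightarrow> i \<in> K \<and> R i j \<noteq> 0 \<and> (\<forall>i'\<in>K. R i' j \<noteq> 0 \<longrightarrow> t i' \<le> t i)"

text \<open>Persistence pairing of the 1-filtration induced by path p (simplices ordered by entry time),
  via a reduced matrix R = D V with V upper triangular and invertible.\<close>
definition paired :: "'k::field itself \<Rightarrow> 'v::linorder set set \<Rightarrow> nat \<Rightarrow> (nat \<times> nat \<Rightarrow> 'v set set)
    \<Rightarrow> (nat \<Rightarrow> nat \<times> nat) \<Rightarrow> 'v set \<Rightarrow> 'v set \<Rightarrow> bool" where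
  "paired _ K n F p a b \<longleftrightarrow>
    (let t = entry_time n F p in
     \<exists>(R :: 'v set \<Rightarrow> 'v set \<Rightarrow> 'k) (V :: 'v set \<Rightarrow> 'v set \<Rightarrow> 'k).
       (\<forall>i\<in>K. \<forall>j\<in>K. R i j = (\<Sum>k\<in>K. bd_coeff i k * V k j)) \<and>
       (\<forall>k\<in>K. \<forall>j\<in>K. V k j \<noteq> 0 \<longrightarrow> t k \<le> t j) \<and>
       (\<forall>j\<in>K. V j j \<noteq> 0) \<and>
       (\<forall>j\<in>K. \<forall>j'\<in>K. \<forall>i. j \<noteq> j' \<and> is_low K t R j i \<and> is_low K t R j' i \<longrightarrow> False) \<and>
       is_low K t R b a)"

end

theory Submission
  imports Defs
begin

text \<open>Fix an injective order of the simplices and a reduction R = D V of the boundary matrix D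
  (V upper triangular with nonzero diagonal, distinct lows in the columns of R). The low of column
  \<tau> of R is \<sigma> exactly when column \<tau> of D, restricted to the rows from \<sigma> on, is not a
  combination of the earlier columns, but becomes one once row \<sigma> is dropped as well. For a path
  through the steps at which \<sigma> and \<tau> enter, the earlier columns are those in F g2, the rows from
  \<sigma> on those outside F g1 and the rows after \<sigma> those outside F h1, whatever the path. By
  non-degeneracy the entry order of every path is injective, and such orders always admit a
  reduction.\<close>

definition in_span_on :: "('a \<Rightarrow> 'b \<Rightarrow> 'k::field) \<Rightarrow> 'b set \<Rightarrow> 'a set \<Rightarrow> ('a \<Rightarrow> 'k) \<Rightarrow> bool" where
  "in_span_on M C A v \<longleftrightarrow> (\<exists>c. \<forall>i\<in>A. v i = (\<Sum>k\<in>C. c k * M i k))"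

lemma in_span_on_zero: "in_span_on M C A (\<lambda>i. 0)"
  unfolding in_span_on_def by (rule exI[of _ "\<lambda>_. 0"]) simp

lemma in_span_on_add:
  assumes "in_span_on M C A v" "in_span_on M C A w"
  shows "in_span_on M C A (\<lambda>i. v i + w i)"
proof -
  from assms obtain c d where "\<forall>i\<in>A. v i = (\<Sum>k\<in>C. c k * M i k)" "\<forall>i\<in>A. w i = (\<Sum>k\<in>C. d k * M i k)"
    unfolding in_span_on_def by blast
  then show ?thesis
    unfolding in_span_on_def by (intro exI[of _ "\<lambda>k. c k + d k"]) (simp add: distrib_right sum.distrib)
qed

lemma in_span_on_scale:
  assumes "in_span_on M C A v"
  shows "in_span_on M C A (\<lambda>i. a * v i)"
proof -
  from assms obtain c where "\<forall>i\<in>A. v i = (\<Sum>k\<in>C. c k * M i k)"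
    unfolding in_span_on_def by blast
  then show ?thesis
    unfolding in_span_on_def by (intro exI[of _ "\<lambda>k. a * c k"]) (simp add: sum_distrib_left mult.assoc)
qed

lemma in_span_on_cong:
  "(\<And>i. i \<in> A \<Longrightarrow> v i = w i) \<Longrightarrow> in_span_on M C A v \<longleftrightarrow> in_span_on M C A w"
  unfolding in_span_on_def by simp

lemma in_span_on_eqI:
  "in_span_on M C A w \<Longrightarrow> (\<And>i. i \<in> A \<Longrightarrow> v i = w i) \<Longrightarrow> in_span_on M C A v"
  using in_span_on_cong by blast

lemma in_span_on_column: "finite C \<Longrightarrow> j \<in> C \<Longrightarrow> in_span_on M C A (\<lambda>i. M i j)"
  unfolding in_span_on_def
  by (intro exI[of _ "\<lambda>k. if k = j then 1 else 0"]) (simp add: if_distrib[where f = "\<lambda>x. x * _"] cong: if_cong)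

lemma in_span_on_sum:
  "finite S \<Longrightarrow> (\<And>k. k \<in> S \<Longrightarrow> in_span_on M C A (f k)) \<Longrightarrow> in_span_on M C A (\<lambda>i. \<Sum>k\<in>S. f k i)"
  by (induction S rule: finite_induct) (simp_all add: in_span_on_zero in_span_on_add)

lemma in_span_on_add_iff:
  assumes "in_span_on M C A u"
  shows "in_span_on M C A (\<lambda>i. v i + u i) \<longleftrightarrow> in_span_on M C A v"
proof
  assume "in_span_on M C A (\<lambda>i. v i + u i)"
  then have "in_span_on M C A (\<lambda>i. (v i + u i) + (-1) * u i)"
    using in_span_on_add in_span_on_scale[OF assms] by blast
  moreover have "(\<lambda>i. (v i + u i) + (-1) * u i) = v" by simp
  ultimately show "in_span_on M C A v" by simp
qed (use assms in_span_on_add in blast)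

lemma in_span_on_scale_iff:
  assumes "a \<noteq> 0"
  shows "in_span_on M C A (\<lambda>i. a * v i) \<longleftrightarrow> in_span_on M C A v"
proof
  assume "in_span_on M C A (\<lambda>i. a * v i)"
  then have "in_span_on M C A (\<lambda>i. inverse a * (a * v i))" by (rule in_span_on_scale)
  moreover have "(\<lambda>i. inverse a * (a * v i)) = v" using assms by (simp add: mult.assoc[symmetric])
  ultimately show "in_span_on M C A v" by simp
qed (rule in_span_on_scale)

lemma in_span_on_trans:
  assumes "finite C'" "\<And>j. j \<in> C' \<Longrightarrow> in_span_on M C A (\<lambda>i. N i j)" "in_span_on N C' A v"
  shows "in_span_on M C A v"
proof -
  from assms(3) obtain c where c: "\<forall>i\<in>A. v i = (\<Sum>k\<in>C'. c k * N i k)"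
    unfolding in_span_on_def by blast
  have "in_span_on M C A (\<lambda>i. \<Sum>k\<in>C'. c k * N i k)"
    using assms(1,2) by (intro in_span_on_sum in_span_on_scale)
  then show ?thesis
    by (rule in_span_on_eqI) (use c in blast)
qed

lemma finite_has_maximizer:
  fixes f :: "'a \<Rightarrow> 'b::linorder"
  assumes "finite S" "x \<in> S"
  shows "\<exists>m\<in>S. \<forall>y\<in>S. f y \<le> f m"
proof -
  have "Max (f ` S) \<in> f ` S"
    using assms by (intro Max_in) auto
  then obtain m where "m \<in> S" "f m = Max (f ` S)"
    by auto
  moreover have "f y \<le> Max (f ` S)" if "y \<in> S" for y
    using assms(1) that by simp
  ultimately show ?thesis
    by metis
qed

lemma is_low_exists:
  assumes "finite K" "i \<in> K" "R i j \<noteq> 0"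
  shows "\<exists>l. is_low K t R j l"
proof -
  obtain l where "l \<in> {i\<in>K. R i j \<noteq> 0}" "\<forall>i\<in>{i\<in>K. R i j \<noteq> 0}. t i \<le> t l"
    using finite_has_maximizer[of "{i\<in>K. R i j \<noteq> 0}" i t] assms by auto
  then show ?thesis
    unfolding is_low_def by auto
qed

lemma is_low_maximal: "is_low K t R j l \<Longrightarrow> i \<in> K \<Longrightarrow> R i j \<noteq> 0 \<Longrightarrow> t i \<le> t l"
  unfolding is_low_def by auto

lemma is_low_exists_above:
  assumes "finite K" "i \<in> K" "s \<le> t i" "R i j \<noteq> 0"
  shows "\<exists>l. is_low K t R j l \<and> s \<le> t l"
proof -
  obtain l where l: "is_low K t R j l"
    using is_low_exists[where t = t and R = R and j = j, OF assms(1,2,4)] by blast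
  then show ?thesis
    using is_low_maximal[OF l assms(2,4)] assms(3) by auto
qed

lemma is_low_iff:
  assumes "finite K" "inj_on t K" "\<sigma> \<in> K"
  shows "is_low K t R \<tau> \<sigma> \<longleftrightarrow>
    (\<exists>i\<in>K. t \<sigma> \<le> t i \<and> R i \<tau> \<noteq> 0) \<and> (\<forall>i\<in>K. t \<sigma> < t i \<longrightarrow> R i \<tau> = 0)"
proof
  assume "is_low K t R \<tau> \<sigma>"
  then show "(\<exists>i\<in>K. t \<sigma> \<le> t i \<and> R i \<tau> \<noteq> 0) \<and> (\<forall>i\<in>K. t \<sigma> < t i \<longrightarrow> R i \<tau> = 0)"
    unfolding is_low_def by force
next
  assume pattern: "(\<exists>i\<in>K. t \<sigma> \<le> t i \<and> R i \<tau> \<noteq> 0) \<and> (\<forall>i\<in>K. t \<sigma> < t i \<longrightarrow> R i \<tau> = 0)"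
  then obtain l where l: "is_low K t R \<tau> l" "t \<sigma> \<le> t l"
    using is_low_exists_above[OF assms(1)] by blast
  then have "l \<in> K" "t l = t \<sigma>"
    using pattern unfolding is_low_def by force+
  then show "is_low K t R \<tau> \<sigma>"
    using l inj_onD[OF assms(2)] assms(3) by metis
qed

locale reduction =
  fixes K :: "'v set set" and t :: "'v set \<Rightarrow> nat"
    and D R V :: "'v set \<Rightarrow> 'v set \<Rightarrow> 'k::field"
  assumes finite_K: "finite K"
    and inj_t: "inj_on t K"
    and R_eq: "\<And>i j. i \<in> K \<Longrightarrow> j \<in> K \<Longrightarrow> R i j = (\<Sum>k\<in>K. D i k * V k j)"
    and V_upper_triangular: "\<And>k j. k \<in> K \<Longrightarrow> j \<in> K \<Longrightarrow> V k j \<noteq> 0 \<Longrightarrow> t k \<le> t j"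
    and V_diagonal_nonzero: "\<And>j. j \<in> K \<Longrightarrow> V j j \<noteq> 0"
    and low_injective: "\<And>j j' i. j \<in> K \<Longrightarrow> j' \<in> K \<Longrightarrow> is_low K t R j i \<Longrightarrow> is_low K t R j' i \<Longrightarrow> j = j'"
begin

lemma R_column_expansion:
  assumes "i \<in> K" "j \<in> K"
  shows "R i j = V j j * D i j + (\<Sum>k\<in>{k\<in>K. t k < t j}. V k j * D i k)"
proof -
  have "R i j = D i j * V j j + (\<Sum>k\<in>K - {j}. D i k * V k j)"
    using R_eq[OF assms] sum.remove[OF finite_K assms(2)] by simp
  also have "(\<Sum>k\<in>K - {j}. D i k * V k j) = (\<Sum>k\<in>{k\<in>K. t k < t j}. D i k * V k j)"
  proof (rule sum.mono_neutral_right)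
    show "finite (K - {j})"
      using finite_K by simp
    show "\<forall>k\<in>K - {j} - {k\<in>K. t k < t j}. D i k * V k j = 0"
    proof
      fix k assume k: "k \<in> K - {j} - {k\<in>K. t k < t j}"
      show "D i k * V k j = 0"
      proof (rule ccontr)
        assume "D i k * V k j \<noteq> 0"
        then have "t k \<le> t j"
          using V_upper_triangular k assms(2) by auto
        moreover have "t k \<noteq> t j"
          using inj_onD[OF inj_t, of k j] k assms(2) by auto
        ultimately show False
          using k by auto
      qed
    qed
  qed auto
  finally show ?thesis
    by (simp add: mult.commute)
qed

lemma R_column_in_D_span:
  assumes "A \<subseteq> K" "j \<in> K" "t j < T"
  shows "in_span_on D {k\<in>K. t k < T} A (\<lambda>i. R i j)"
proof -
  have "finite {k\<in>K. t k < T}"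
    using finite_K by simp
  then have "in_span_on D {k\<in>K. t k < T} A
      (\<lambda>i. V j j * D i j + (\<Sum>k\<in>{k\<in>K. t k < t j}. V k j * D i k))"
    using assms finite_K
    by (intro in_span_on_add in_span_on_scale in_span_on_sum in_span_on_column) auto
  then show ?thesis
    by (rule in_span_on_eqI) (use R_column_expansion assms in auto)
qed

lemma D_column_in_R_span:
  assumes "A \<subseteq> K"
  shows "j \<in> K \<Longrightarrow> t j < T \<Longrightarrow> in_span_on R {k\<in>K. t k < T} A (\<lambda>i. D i j)"
proof (induction "t j" arbitrary: j rule: less_induct)
  case less
  let ?earlier = "{k\<in>K. t k < t j}"
  have "finite {k\<in>K. t k < T}" "finite ?earlier"
    using finite_K by simp_all
  then have "in_span_on R {k\<in>K. t k < T} A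
      (\<lambda>i. inverse (V j j) * (R i j + (-1) * (\<Sum>k\<in>?earlier. V k j * D i k)))"
    using less by (intro in_span_on_add in_span_on_scale in_span_on_sum in_span_on_column) auto
  moreover have "D i j = inverse (V j j) * (R i j + (-1) * (\<Sum>k\<in>?earlier. V k j * D i k))"
    if "i \<in> A" for i
    using R_column_expansion[of i j] V_diagonal_nonzero[of j] that assms less.prems
    by (auto simp: field_simps)
  ultimately show ?case
    by (rule in_span_on_eqI)
qed

lemma D_column_in_span_iff:
  assumes "A \<subseteq> K" "j \<in> K"
  shows "in_span_on D {k\<in>K. t k < t j} A (\<lambda>i. D i j) \<longleftrightarrow>
    in_span_on R {k\<in>K. t k < t j} A (\<lambda>i. R i j)"
proof -
  let ?earlier = "{k\<in>K. t k < t j}"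
  have fin: "finite ?earlier"
    using finite_K by simp
  have D_in_R: "\<And>k. k \<in> ?earlier \<Longrightarrow> in_span_on R ?earlier A (\<lambda>i. D i k)"
    using D_column_in_R_span[OF assms(1)] by blast
  have R_in_D: "\<And>k. k \<in> ?earlier \<Longrightarrow> in_span_on D ?earlier A (\<lambda>i. R i k)"
    using R_column_in_D_span[OF assms(1)] by blast
  have combination: "in_span_on D ?earlier A (\<lambda>i. \<Sum>k\<in>?earlier. V k j * D i k)"
    using fin by (intro in_span_on_sum in_span_on_scale in_span_on_column) auto
  have "in_span_on D ?earlier A (\<lambda>i. D i j) \<longleftrightarrow> in_span_on D ?earlier A (\<lambda>i. V j j * D i j)"
    by (rule in_span_on_scale_iff[OF V_diagonal_nonzero[OF assms(2)], symmetric])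
  also have "\<dots> \<longleftrightarrow>
      in_span_on D ?earlier A (\<lambda>i. V j j * D i j + (\<Sum>k\<in>?earlier. V k j * D i k))"
    by (rule in_span_on_add_iff[OF combination, symmetric])
  also have "\<dots> \<longleftrightarrow> in_span_on D ?earlier A (\<lambda>i. R i j)"
    by (rule in_span_on_cong) (use R_column_expansion assms in auto)
  also have "\<dots> \<longleftrightarrow> in_span_on R ?earlier A (\<lambda>i. R i j)"
    using in_span_on_trans[where M = R and N = D, OF fin D_in_R]
      in_span_on_trans[where M = D and N = R, OF fin R_in_D] by blast
  finally show ?thesis .
qed

lemma R_vanishes_at_later_low:
  assumes j: "j \<in> K" "is_low K t R j r" and k: "k \<in> K" "is_low K t R k l" "k \<noteq> j"
    and later: "t l \<le> t r"
  shows "R r k = 0"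
proof (rule ccontr)
  assume "R r k \<noteq> 0"
  then have "t r \<le> t l"
    using is_low_maximal[OF k(2)] j(2) unfolding is_low_def by blast
  then have "l = r"
    using later inj_onD[OF inj_t] j(2) k(2) unfolding is_low_def by auto
  then show False
    using low_injective[OF j(1) k(1)] j(2) k(2,3) by auto
qed

text \<open>At the latest low among the columns of a combination only one column is nonzero.\<close>
lemma R_column_not_in_span_on_upset:
  assumes \<tau>: "\<tau> \<in> K" "\<tau> \<notin> C" and C: "C \<subseteq> K"
    and nonzero: "i \<in> K" "s \<le> t i" "R i \<tau> \<noteq> 0"
  shows "\<not> in_span_on R C {x\<in>K. s \<le> t x} (\<lambda>i. R i \<tau>)"
proof
  assume "in_span_on R C {x\<in>K. s \<le> t x} (\<lambda>i. R i \<tau>)"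
  then obtain c where c: "\<And>i. i \<in> K \<Longrightarrow> s \<le> t i \<Longrightarrow> R i \<tau> = (\<Sum>k\<in>C. c k * R i k)"
    unfolding in_span_on_def by blast
  define d where "d k = (if k = \<tau> then -1 else c k)" for k
  define J where "J = {k\<in>insert \<tau> C. d k \<noteq> 0 \<and> (\<exists>i\<in>K. s \<le> t i \<and> R i k \<noteq> 0)}"
  have fin: "finite (insert \<tau> C)"
    using finite_subset[OF C finite_K] by simp
  have J: "J \<subseteq> insert \<tau> C" "J \<subseteq> K" "\<tau> \<in> J"
    using C \<tau>(1) nonzero unfolding J_def d_def by auto
  have "\<exists>l. is_low K t R k l \<and> s \<le> t l" if "k \<in> J" for k
    using that is_low_exists_above[OF finite_K] unfolding J_def by blast
  then obtain low where low: "\<And>k. k \<in> J \<Longrightarrow> is_low K t R k (low k) \<and> s \<le> t (low k)"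
    by metis
  obtain j where j: "j \<in> J" "\<And>k. k \<in> J \<Longrightarrow> t (low k) \<le> t (low j)"
    using finite_has_maximizer[of J \<tau> "\<lambda>k. t (low k)"] finite_subset[OF J(1) fin] J(3) by blast
  define r where "r = low j"
  have r: "r \<in> K" "s \<le> t r" "R r j \<noteq> 0"
    using low[OF j(1)] unfolding r_def is_low_def by auto
  have vanish: "d k * R r k = 0" if k: "k \<in> insert \<tau> C - {j}" for k
  proof (cases "k \<in> J")
    case True
    then show ?thesis
      using R_vanishes_at_later_low[of j r k "low k"] low j J(2) k unfolding r_def by auto
  qed (use k r(1,2) J_def in auto)
  have "(\<Sum>k\<in>C. d k * R r k) = (\<Sum>k\<in>C. c k * R r k)"
    using \<tau>(2) unfolding d_def by (intro sum.cong) auto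
  then have "(\<Sum>k\<in>insert \<tau> C. d k * R r k) = 0"
    using c[OF r(1,2)] \<tau>(2) fin by (simp add: d_def)
  moreover have "(\<Sum>k\<in>insert \<tau> C. d k * R r k) = d j * R r j + (\<Sum>k\<in>insert \<tau> C - {j}. d k * R r k)"
    using sum.remove[OF fin] j(1) J(1) by blast
  moreover have "(\<Sum>k\<in>insert \<tau> C - {j}. d k * R r k) = 0"
    using vanish by (intro sum.neutral) blast
  moreover have "d j * R r j \<noteq> 0"
    using j(1) r(3) unfolding J_def by auto
  ultimately show False by simp
qed

lemma R_column_in_span_on_upset_iff:
  assumes "\<tau> \<in> K"
  shows "in_span_on R {k\<in>K. t k < t \<tau>} {x\<in>K. s \<le> t x} (\<lambda>i. R i \<tau>) \<longleftrightarrow>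
    (\<forall>i\<in>K. s \<le> t i \<longrightarrow> R i \<tau> = 0)"
proof
  assume "in_span_on R {k\<in>K. t k < t \<tau>} {x\<in>K. s \<le> t x} (\<lambda>i. R i \<tau>)"
  then show "\<forall>i\<in>K. s \<le> t i \<longrightarrow> R i \<tau> = 0"
    using R_column_not_in_span_on_upset[OF assms, of "{k\<in>K. t k < t \<tau>}"] by auto
next
  assume "\<forall>i\<in>K. s \<le> t i \<longrightarrow> R i \<tau> = 0"
  then show "in_span_on R {k\<in>K. t k < t \<tau>} {x\<in>K. s \<le> t x} (\<lambda>i. R i \<tau>)"
    by (intro in_span_on_eqI[OF in_span_on_zero]) auto
qed

lemma is_low_iff_D_span:
  assumes "\<sigma> \<in> K" "\<tau> \<in> K"
  shows "is_low K t R \<tau> \<sigma> \<longleftrightarrow>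
    \<not> in_span_on D {k\<in>K. t k < t \<tau>} {x\<in>K. t \<sigma> \<le> t x} (\<lambda>i. D i \<tau>) \<and>
    in_span_on D {k\<in>K. t k < t \<tau>} {x\<in>K. t \<sigma> < t x} (\<lambda>i. D i \<tau>)"
  using is_low_iff[OF finite_K inj_t assms(1)]
    D_column_in_span_iff[OF _ assms(2)] R_column_in_span_on_upset_iff[OF assms(2)]
    R_column_in_span_on_upset_iff[OF assms(2), of "Suc (t \<sigma>)"]
  by (auto simp: Suc_le_eq)

end

definition triangular_combination :: "'a set \<Rightarrow> ('a \<Rightarrow> nat) \<Rightarrow> 'a \<Rightarrow> ('a \<Rightarrow> 'k::field) \<Rightarrow> bool" where
  "triangular_combination K t j w \<longleftrightarrow> w j \<noteq> 0 \<and> (\<forall>k\<in>K. w k \<noteq> 0 \<longrightarrow> t k \<le> t j)"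

definition combination_vanishes_from ::
    "'a set \<Rightarrow> ('a \<Rightarrow> nat) \<Rightarrow> ('a \<Rightarrow> 'a \<Rightarrow> 'k::field) \<Rightarrow> ('a \<Rightarrow> 'k) \<Rightarrow> nat \<Rightarrow> bool" where
  "combination_vanishes_from K t D w m \<longleftrightarrow> (\<forall>i\<in>K. (\<Sum>k\<in>K. D i k * w k) \<noteq> 0 \<longrightarrow> t i < m)"

lemma eliminate_common_low:
  assumes inj: "inj_on t K" and i: "i \<in> K" and j: "j \<in> K"
    and w: "triangular_combination K t j w" "combination_vanishes_from K t D w (Suc (t i))"
    and w': "triangular_combination K t j' w'" "combination_vanishes_from K t D w' (Suc (t i))"
    and before: "t j' < t j"
    and nonzero: "(\<Sum>k\<in>K. D i k * w' k) \<noteq> 0"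
  defines "c \<equiv> (\<Sum>k\<in>K. D i k * w k) / (\<Sum>k\<in>K. D i k * w' k)"
  shows "triangular_combination K t j (\<lambda>k. w k - c * w' k) \<and>
    combination_vanishes_from K t D (\<lambda>k. w k - c * w' k) (t i)"
proof
  have "w' j = 0"
    using w'(1) before j unfolding triangular_combination_def by (meson leD)
  then show "triangular_combination K t j (\<lambda>k. w k - c * w' k)"
    using w(1) w'(1) before unfolding triangular_combination_def by force
  have combination: "(\<Sum>k\<in>K. D i' k * (w k - c * w' k)) =
      (\<Sum>k\<in>K. D i' k * w k) - c * (\<Sum>k\<in>K. D i' k * w' k)" for i'
    by (simp add: algebra_simps sum_subtractf sum_distrib_left)
  show "combination_vanishes_from K t D (\<lambda>k. w k - c * w' k) (t i)"
    unfolding combination_vanishes_from_def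
  proof (intro ballI impI)
    fix i' assume i': "i' \<in> K" and nz: "(\<Sum>k\<in>K. D i' k * (w k - c * w' k)) \<noteq> 0"
    then have "t i' < Suc (t i)"
      using w(2) w'(2) combination[of i'] unfolding combination_vanishes_from_def by force
    moreover have "i' \<noteq> i"
      using nz combination[of i] nonzero unfolding c_def by auto
    then have "t i' \<noteq> t i"
      using inj_onD[OF inj] i' i by blast
    ultimately show "t i' < t i" by simp
  qed
qed

lemma reduction_of_earliest_combinations:
  fixes D :: "'v set \<Rightarrow> 'v set \<Rightarrow> 'k::field"
  assumes fin: "finite K" and inj: "inj_on t K"
    and W_triangular: "\<And>j. triangular_combination K t j (W j)"
    and W_vanishes: "\<And>j. combination_vanishes_from K t D (W j) (m j)"
    and m_le: "\<And>j w m'. triangular_combination K t j w \<Longrightarrow> combination_vanishes_from K t D w m' \<Longrightarrow> m j \<le> m'"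
  shows "reduction K t D (\<lambda>i j. \<Sum>k\<in>K. D i k * W j k) (\<lambda>k j. W j k)"
    (is "reduction K t D ?R ?V")
proof
  have m_low: "m j = Suc (t i)" if low: "is_low K t ?R j i" for j i
  proof (rule antisym)
    have "combination_vanishes_from K t D (W j) (Suc (t i))"
      using low unfolding combination_vanishes_from_def is_low_def by (simp add: less_Suc_eq_le)
    then show "m j \<le> Suc (t i)"
      using W_triangular m_le by blast
    show "Suc (t i) \<le> m j"
      using W_vanishes[of j] low unfolding combination_vanishes_from_def is_low_def by auto
  qed
  have no_common_low: False
    if j: "j \<in> K" "is_low K t ?R j i" and j': "is_low K t ?R j' i" "t j' < t j" for j j' i
  proof -
    have i: "i \<in> K" "(\<Sum>k\<in>K. D i k * W j' k) \<noteq> 0"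
      using j'(1) unfolding is_low_def by auto
    have "m j \<le> t i"
      using eliminate_common_low[OF inj i(1) j(1) W_triangular[of j]
          W_vanishes[of j, unfolded m_low[OF j(2)]] W_triangular[of j']
          W_vanishes[of j', unfolded m_low[OF j'(1)]] j'(2) i(2)]
        m_le by blast
    then show False
      using m_low[OF j(2)] by simp
  qed
  show "j = j'" if "j \<in> K" "j' \<in> K" "is_low K t ?R j i" "is_low K t ?R j' i" for j j' i
  proof (rule ccontr)
    assume "j \<noteq> j'"
    then have "t j \<noteq> t j'"
      using inj_onD[OF inj] that(1,2) by blast
    then show False
      using no_common_low[of j i j'] no_common_low[of j' i j] that by (meson linorder_neqE_nat)
  qed
qed (use fin inj W_triangular in \<open>auto simp: triangular_combination_def\<close>)

text \<open>Choose for each column a triangular combination whose nonzero rows end as early as possible;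
  two such columns cannot share a low, since subtracting a multiple of the earlier one from the later
  one would end even earlier.\<close>
lemma reduction_exists:
  fixes D :: "'v set \<Rightarrow> 'v set \<Rightarrow> 'k::field"
  assumes fin: "finite K" and inj: "inj_on t K"
  shows "\<exists>R V. reduction K t D R V"
proof -
  let ?admissible = "\<lambda>j w m. triangular_combination K t j w \<and> combination_vanishes_from K t D w m"
  obtain M where M: "\<forall>x\<in>K. t x < M"
    using finite_nat_set_iff_bounded[of "t ` K"] fin by auto
  have "?admissible j (\<lambda>k. if k = j then 1 else 0) M" for j
    using M unfolding triangular_combination_def combination_vanishes_from_def by simp
  then have ex: "\<exists>m w. ?admissible j w m" for j by blast
  define m where "m j = (LEAST m. \<exists>w. ?admissible j w m)" for j
  have m_le: "m j \<le> m'" if "?admissible j w m'" for j w m'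
    unfolding m_def by (rule Least_le) (use that in blast)
  have "\<exists>w. ?admissible j w (m j)" for j
    unfolding m_def by (rule LeastI_ex[OF ex])
  then obtain W where "\<And>j. triangular_combination K t j (W j)"
    and "\<And>j. combination_vanishes_from K t D (W j) (m j)"
    by metis
  then have "reduction K t D (\<lambda>i j. \<Sum>k\<in>K. D i k * W j k) (\<lambda>k j. W j k)"
    using m_le by (intro reduction_of_earliest_combinations[OF fin inj]) blast+
  then show ?thesis by blast
qed

lemma paired_iff_reduction:
  fixes K :: "'v::linorder set set"
  assumes fin: "finite K" and inj: "inj_on (entry_time n F p) K"
  shows "paired TYPE('k::field) K n F p \<sigma> \<tau> \<longleftrightarrow>
    (\<exists>R (V :: 'v set \<Rightarrow> 'v set \<Rightarrow> 'k).
      reduction K (entry_time n F p) bd_coeff R V \<and> is_low K (entry_time n F p) R \<tau> \<sigma>)"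
    (is "?paired \<longleftrightarrow> (\<exists>R V. reduction K ?t ?D R V \<and> _)")
proof
  assume ?paired
  then obtain R V :: "'v set \<Rightarrow> 'v set \<Rightarrow> 'k"
    where R: "\<forall>i\<in>K. \<forall>j\<in>K. R i j = (\<Sum>k\<in>K. bd_coeff i k * V k j)"
      and V: "\<forall>k\<in>K. \<forall>j\<in>K. V k j \<noteq> 0 \<longrightarrow> ?t k \<le> ?t j" "\<forall>j\<in>K. V j j \<noteq> 0"
      and lows: "\<forall>j\<in>K. \<forall>j'\<in>K. \<forall>i. j \<noteq> j' \<and> is_low K ?t R j i \<and> is_low K ?t R j' i \<longrightarrow> False"
      and low: "is_low K ?t R \<tau> \<sigma>"
    unfolding paired_def Let_def by (elim exE conjE)
  have "reduction K ?t bd_coeff R V"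
    by unfold_locales (use fin inj R V lows in blast)+
  with low show "\<exists>R V. reduction K ?t ?D R V \<and> is_low K ?t R \<tau> \<sigma>"
    by blast
next
  assume "\<exists>R V. reduction K ?t ?D R V \<and> is_low K ?t R \<tau> \<sigma>"
  then obtain R V :: "'v set \<Rightarrow> 'v set \<Rightarrow> 'k"
    where red: "reduction K ?t bd_coeff R V" and low: "is_low K ?t R \<tau> \<sigma>"
    by blast
  show ?paired
    unfolding paired_def Let_def
    using reduction.R_eq[OF red] reduction.V_upper_triangular[OF red]
      reduction.V_diagonal_nonzero[OF red] reduction.low_injective[OF red] low
    by blast
qed

lemma path_step:
  "is_path n p \<Longrightarrow> s < 2 * n \<Longrightarrow>
    p (Suc s) = (fst (p s) + 1, snd (p s)) \<or> p (Suc s) = (fst (p s), snd (p s) + 1)"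
  unfolding is_path_def by blast

lemma path_grade_mono:
  assumes "is_path n p" "s \<le> s'" "s' \<le> 2 * n"
  shows "grade_le (p s) (p s')"
  using assms(2)
proof (induction rule: dec_induct)
  case (step m)
  then have "grade_le (p m) (p (Suc m))"
    using path_step[OF assms(1), of m] assms(3) by (auto simp: grade_le_def)
  with step.IH show ?case
    unfolding grade_le_def by auto
qed (simp add: grade_le_def)

lemma path_in_grid: "is_path n p \<Longrightarrow> s \<le> 2 * n \<Longrightarrow> p s \<in> grid n"
  using path_grade_mono[of n p s "2 * n"] unfolding is_path_def grade_le_def grid_def
  by (cases "p s") auto

lemma takes_step_target_in_grid: "is_path n p \<Longrightarrow> takes_step n p g h \<Longrightarrow> h \<in> grid n"
  unfolding takes_step_def using path_in_grid by (metis Suc_leI)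

lemma filtration_subset: "two_filtration K n F \<Longrightarrow> g \<in> grid n \<Longrightarrow> F g \<subseteq> K"
  unfolding two_filtration_def subcomplex_def by blast

lemma filtration_mono:
  "two_filtration K n F \<Longrightarrow> g \<in> grid n \<Longrightarrow> h \<in> grid n \<Longrightarrow> grade_le g h \<Longrightarrow> F g \<subseteq> F h"
  unfolding two_filtration_def by blast

lemma filtration_path_mono:
  assumes "two_filtration K n F" "is_path n p" "s \<le> s'" "s' \<le> 2 * n"
  shows "F (p s) \<subseteq> F (p s')"
  using assms path_grade_mono path_in_grid filtration_mono by (metis le_trans)

lemma entry_time_ex1:
  assumes F: "two_filtration K n F" and p: "is_path n p" and x: "x \<in> K"
  shows "\<exists>!e. e < 2 * n \<and> x \<in> F (p (Suc e)) \<and> x \<notin> F (p e)"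
proof -
  have "x \<in> F (p (2 * n))" "x \<notin> F (p 0)"
    using F p x unfolding two_filtration_def is_path_def by auto
  then obtain e where "e < 2 * n" "x \<in> F (p (Suc e))" "x \<notin> F (p e)"
    using ex_least_nat_less[of "\<lambda>s. x \<in> F (p s)"] by auto
  moreover have "e' = e"
    if "e' < 2 * n" "x \<in> F (p (Suc e'))" "x \<notin> F (p e')" "e < 2 * n" "x \<in> F (p (Suc e))" "x \<notin> F (p e)"
    for e e'
    using that filtration_path_mono[OF F p, of "Suc e" e'] filtration_path_mono[OF F p, of "Suc e'" e]
    by (metis Suc_leI in_mono le_less linorder_neqE_nat)
  ultimately show ?thesis by blast
qed

lemma entry_time_enters:
  assumes "two_filtration K n F" "is_path n p" "x \<in> K"
  shows "entry_time n F p x < 2 * n \<and> x \<in> F (p (Suc (entry_time n F p x))) \<and> x \<notin> F (p (entry_time n F p x))"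
  unfolding entry_time_def using theI'[OF entry_time_ex1[OF assms]] .

lemma mem_filtration_path_iff:
  assumes F: "two_filtration K n F" and p: "is_path n p" and x: "x \<in> K" and s: "s \<le> 2 * n"
  shows "x \<in> F (p s) \<longleftrightarrow> entry_time n F p x < s"
proof
  assume "x \<in> F (p s)"
  then show "entry_time n F p x < s"
    using entry_time_enters[OF F p x] filtration_path_mono[OF F p, of s "entry_time n F p x"]
    by (meson less_imp_le_nat not_less subsetD)
next
  assume "entry_time n F p x < s"
  then show "x \<in> F (p s)"
    using entry_time_enters[OF F p x] filtration_path_mono[OF F p, of "Suc (entry_time n F p x)" s] s
    by (auto simp: Suc_le_eq)
qed

lemma entry_time_compare_at_step:
  assumes F: "two_filtration K n F" and p: "is_path n p"
    and step: "takes_step n p g h" "\<sigma> \<in> F h" "\<sigma> \<notin> F g" and x: "x \<in> K"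
  shows "x \<in> F g \<longleftrightarrow> entry_time n F p x < entry_time n F p \<sigma>"
    and "x \<in> F h \<longleftrightarrow> entry_time n F p x \<le> entry_time n F p \<sigma>"
proof -
  obtain s where s: "s < 2 * n" "p s = g" "p (Suc s) = h"
    using step(1) unfolding takes_step_def by blast
  have "\<sigma> \<in> K"
    using filtration_subset[OF F takes_step_target_in_grid[OF p step(1)]] step(2) by blast
  then have "entry_time n F p \<sigma> = s"
    using mem_filtration_path_iff[OF F p, of \<sigma>] s step(2,3) by force
  then show "x \<in> F g \<longleftrightarrow> entry_time n F p x < entry_time n F p \<sigma>"
    and "x \<in> F h \<longleftrightarrow> entry_time n F p x \<le> entry_time n F p \<sigma>"
    using mem_filtration_path_iff[OF F p x] s by (auto simp: less_Suc_eq_le)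
qed

lemma lower_corner_below:
  assumes h: "h \<in> grid n" "x \<in> F h"
  shows "\<exists>c\<in>lower_corners n F x. grade_le c h"
proof -
  let ?below = "\<lambda>c. c \<in> grid n \<and> x \<in> F c \<and> grade_le c h"
  obtain c where c: "?below c" and least: "\<And>c'. ?below c' \<Longrightarrow> fst c + snd c \<le> fst c' + snd c'"
    using ex_has_least_nat[of ?below h "\<lambda>c. fst c + snd c"] h by (auto simp: grade_le_def)
  have "c \<in> lower_corners n F x"
    unfolding lower_corners_def
  proof (intro CollectI conjI ballI impI)
    fix c' assume c': "c' \<in> grid n" "x \<in> F c' \<and> grade_le c' c"
    then have "fst c + snd c \<le> fst c' + snd c'"
      using c by (intro least) (auto simp: grade_le_def)
    then show "c' = c"
      using c'(2) unfolding grade_le_def by (simp add: prod_eq_iff)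
  qed (use c in auto)
  then show ?thesis
    using c by blast
qed

text \<open>A simplex entering along a horizontal (vertical) step has a lower corner in the column
  (row) of the step's target, so non-degeneracy allows only one simplex per step.\<close>
lemma entry_time_inj:
  assumes F: "two_filtration K n F" and nd: "non_degenerate K n F" and p: "is_path n p"
  shows "inj_on (entry_time n F p) K"
proof (rule inj_onI)
  fix x y assume x: "x \<in> K" and y: "y \<in> K" and same: "entry_time n F p x = entry_time n F p y"
  define e where "e = entry_time n F p x"
  have grid: "p e \<in> grid n" "p (Suc e) \<in> grid n"
    using entry_time_enters[OF F p x] path_in_grid[OF p] unfolding e_def by auto
  have corner: "\<exists>c\<in>lower_corners n F z. grade_le c (p (Suc e)) \<and> \<not> grade_le c (p e)"
    if z: "z \<in> F (p (Suc e))" "z \<notin> F (p e)" for z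
  proof -
    obtain c where c: "c \<in> lower_corners n F z" "grade_le c (p (Suc e))"
      using lower_corner_below[where F = F, OF grid(2) z(1)] by blast
    then have "\<not> grade_le c (p e)"
      using filtration_mono[OF F _ grid(1)] z(2) unfolding lower_corners_def by blast
    with c show ?thesis by blast
  qed
  obtain cx cy where cx: "cx \<in> lower_corners n F x" "grade_le cx (p (Suc e))" "\<not> grade_le cx (p e)"
    and cy: "cy \<in> lower_corners n F y" "grade_le cy (p (Suc e))" "\<not> grade_le cy (p e)"
    using corner entry_time_enters[OF F p x] entry_time_enters[OF F p y] same unfolding e_def by metis
  have "fst cx = fst cy \<or> snd cx = snd cy"
    using path_step[OF p, of e] entry_time_enters[OF F p x] cx(2,3) cy(2,3)
    unfolding e_def grade_le_def by auto
  then have "(x, cx) = (y, cy)"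
    using nd x y cx(1) cy(1) unfolding non_degenerate_def by blast
  then show "x = y" by simp
qed

lemma paired_iff_span_condition:
  assumes K: "simplicial_complex K" and F: "two_filtration K n F"
    and nd: "non_degenerate K n F" and p: "is_path n p"
    and \<sigma>: "takes_step n p g1 h1" "\<sigma> \<in> F h1" "\<sigma> \<notin> F g1"
    and \<tau>: "takes_step n p g2 h2" "\<tau> \<in> F h2" "\<tau> \<notin> F g2"
  shows "paired TYPE('k::field) K n F p \<sigma> \<tau> \<longleftrightarrow>
    \<not> in_span_on (bd_coeff :: 'v::linorder set \<Rightarrow> 'v set \<Rightarrow> 'k) (K \<inter> F g2) (K - F g1) (\<lambda>i. bd_coeff i \<tau>) \<and>
    in_span_on (bd_coeff :: 'v set \<Rightarrow> 'v set \<Rightarrow> 'k) (K \<inter> F g2) (K - F h1) (\<lambda>i. bd_coeff i \<tau>)"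
    (is "_ \<longleftrightarrow> \<not> in_span_on ?D _ _ ?col \<and> _")
proof -
  define t where "t = entry_time n F p"
  have fin: "finite K"
    using K unfolding simplicial_complex_def by simp
  have inj: "inj_on t K"
    unfolding t_def by (rule entry_time_inj[OF F nd p])
  have in_K: "\<sigma> \<in> K" "\<tau> \<in> K"
    using filtration_subset[OF F takes_step_target_in_grid[OF p \<sigma>(1)]]
      filtration_subset[OF F takes_step_target_in_grid[OF p \<tau>(1)]] \<sigma>(2) \<tau>(2) by blast+
  have sets: "{k\<in>K. t k < t \<tau>} = K \<inter> F g2"
    "{x\<in>K. t \<sigma> \<le> t x} = K - F g1" "{x\<in>K. t \<sigma> < t x} = K - F h1"
    using entry_time_compare_at_step[OF F p \<sigma>] entry_time_compare_at_step[OF F p \<tau>]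
    unfolding t_def by (auto simp: not_less not_le)
  have "paired TYPE('k) K n F p \<sigma> \<tau> \<longleftrightarrow>
      (\<exists>R V. reduction K t ?D R V \<and> is_low K t R \<tau> \<sigma>)"
    using paired_iff_reduction[OF fin inj[unfolded t_def]] unfolding t_def .
  also have "\<dots> \<longleftrightarrow>
      (\<exists>R V. reduction K t ?D R V \<and> \<not> in_span_on ?D {k\<in>K. t k < t \<tau>} {x\<in>K. t \<sigma> \<le> t x} ?col \<and>
        in_span_on ?D {k\<in>K. t k < t \<tau>} {x\<in>K. t \<sigma> < t x} ?col)"
    using reduction.is_low_iff_D_span[OF _ in_K] by blast
  also have "\<dots> \<longleftrightarrow>
      \<not> in_span_on ?D {k\<in>K. t k < t \<tau>} {x\<in>K. t \<sigma> \<le> t x} ?col \<and>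
      in_span_on ?D {k\<in>K. t k < t \<tau>} {x\<in>K. t \<sigma> < t x} ?col"
    using reduction_exists[OF fin inj] by blast
  finally show ?thesis
    unfolding sets .
qed

theorem mainTheorem6:
  fixes K :: "'v::linorder set set"
    and n :: nat
    and F :: "nat \<times> nat \<Rightarrow> 'v set set"
    and p q :: "nat \<Rightarrow> nat \<times> nat"
    and \<sigma> \<tau> :: "'v set"
    and g1 h1 g2 h2 :: "nat \<times> nat"
  assumes "simplicial_complex K"
    and "two_filtration K n F"
    and "non_degenerate K n F"
    and "is_path n p"
    and "takes_step n p g1 h1" and "\<sigma> \<in> F h1" and "\<sigma> \<notin> F g1"
    and "takes_step n p g2 h2" and "\<tau> \<in> F h2" and "\<tau> \<notin> F g2"
    and "paired TYPE('k::field) K n F p \<sigma> \<tau>"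
  shows "\<forall>q. is_path n q \<and> takes_step n q g1 h1 \<and> takes_step n q g2 h2
           \<longrightarrow> paired TYPE('k) K n F q \<sigma> \<tau>"
proof (intro allI impI)
  fix q assume q: "is_path n q \<and> takes_step n q g1 h1 \<and> takes_step n q g2 h2"
  then show "paired TYPE('k) K n F q \<sigma> \<tau>"
    using assms(11) paired_iff_span_condition[OF assms(1-10)]
      paired_iff_span_condition[OF assms(1-3), of q g1 h1 \<sigma> g2 h2 \<tau>] assms(6,7,9,10)
    by blast
qed

end
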